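(* Let $\mathcal P$ be a Fitting program over a bilattice $\mathcal B$ and $\alpha\in\{\mathcal F,\mathcal T,\mathcal U,\mathcal I\}$. Then $\Psi'^{\alpha}_{\mathcal P}$ has a least fixpoint, denoted $Fix^{\alpha}_{\mathcal U}$, and a greatest fixpoint, denoted $Fix^{\alpha}_{\mathcal I}$, with respect to the knowledge ordering $\le_k$ on $\mathcal V(\mathcal B)$.
   Context: A bilattice $\langle\mathcal B,\le_t,\le_k\rangle$ is a nonempty set with two partial orders, each making $\mathcal B$ a lattice with top and bottom. Under $\le_t$, meet and join are $\wedge,\vee$ (infinitary $\bigwedge,\bigvee$), bottom $\mathcal F$, top $\mathcal T$; under $\le_k$, meet and join are $\otimes,\oplus$ (infinitary $\bigotimes,\bigoplus$), bottom $\mathcal U$, top $\mathcal I$. Standing assumptions: $\mathcal B$ is complete for both orders, infinitely distributive, satisfies the infinitary interlacing conditions (each of $\wedge,\vee,\otimes,\oplus$ and their infinitary versions is monotone w.r.t. both orderings), and has a negation $\neg$ (an involution reversing $\le_t$ and preserving $\le_k$). A formula is built from literals ($A$ or $\neg A$) and elements of $\mathcal B$ using $\wedge,\vee,\otimes,\oplus,\exists,\forall$ (with built-in predicate $equal$). A clause is $P(x_1,\dots,x_n)\leftarrow\phi(x_1,\dots,x_n)$ with the body's free variables among $x_1,\dots,x_n$. A Fitting program is a finite set of clauses with no predicate letter heading more than one clause; Inst-$\mathcal P$ is its set of ground instances. $\mathcal V(\mathcal B)$: maps from ground atoms to $\mathcal B$, with pointwise orders/operations. Valuations extend to closed formulas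 compositionally ($v(\beta)=\beta$, connectives pointwise, $\exists$ as $\bigvee$, $\forall$ as $\bigwedge$ over closed-term instances, $v(equal(s,t))=\mathcal T$ if $s=t$ else $\mathcal F$). The contrajoin $v\bigtriangleup w$ evaluates likewise but gives $A$ the value $v(A)$ and $\neg A$ the value $\neg w(A)$. $\Psi_{\mathcal P}^{\alpha}(v,w)(A)=\alpha$ if $A$ heads no member of Inst-$\mathcal P$, and $=(v\bigtriangleup w)(B)$ if $A\leftarrow B\in$ Inst-$\mathcal P$. With $v_\alpha$ the constant valuation $\alpha$, $\Psi'^{\alpha}_{\mathcal P}(v)$ is the limit of $a_0=v_\alpha$, $a_{n+1}=\Psi_{\mathcal P}^{\alpha}(a_n,v)$, $a_\lambda=\bigvee_{n<\lambda}$ (resp. $\bigwedge,\bigoplus,\bigotimes$) of $\Psi_{\mathcal P}^{\alpha}(a_n,v)$ for limit $\lambda$ when $\alpha=\mathcal F$ (resp. $\mathcal T,\mathcal U,\mathcal I$); equivalently the $\le_t$-least (resp. $\le_t$-greatest, $\le_k$-least, $\le_k$-greatest) fixpoint of $x\mapsto\Psi_{\mathcal P}^{\alpha}(x,v)$. *)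

theory Defs
  imports Main
begin

record 'b bilat =
  leqt :: "'b \<Rightarrow> 'b \<Rightarrow> bool"
  leqk :: "'b \<Rightarrow> 'b \<Rightarrow> bool"
  bneg :: "'b \<Rightarrow> 'b"

definition is_lub :: "('b \<Rightarrow> 'b \<Rightarrow> bool) \<Rightarrow> 'b set \<Rightarrow> 'b \<Rightarrow> bool" where
  "is_lub le A s \<longleftrightarrow> (\<forall>a\<in>A. le a s) \<and> (\<forall>u. (\<forall>a\<in>A. le a u) \<longrightarrow> le s u)"

definition is_glb :: "('b \<Rightarrow> 'b \<Rightarrow> bool) \<Rightarrow> 'b set \<Rightarrow> 'b \<Rightarrow> bool" where
  "is_glb le A s \<longleftrightarrow> (\<forall>a\<in>A. le s a) \<and> (\<forall>u. (\<forall>a\<in>A. le u a) \<longrightarrow> le u s)"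

definition Lub :: "('b \<Rightarrow> 'b \<Rightarrow> bool) \<Rightarrow> 'b set \<Rightarrow> 'b" where
  "Lub le A = (THE s. is_lub le A s)"

definition Glb :: "('b \<Rightarrow> 'b \<Rightarrow> bool) \<Rightarrow> 'b set \<Rightarrow> 'b" where
  "Glb le A = (THE s. is_glb le A s)"

definition porder :: "('b \<Rightarrow> 'b \<Rightarrow> bool) \<Rightarrow> bool" where
  "porder le \<longleftrightarrow> (\<forall>a. le a a) \<and> (\<forall>a b. le a b \<and> le b a \<longrightarrow> a = b)
     \<and> (\<forall>a b c. le a b \<and> le b c \<longrightarrow> le a c)"

definition tMeet :: "('b, 'z) bilat_scheme \<Rightarrow> 'b set \<Rightarrow> 'b" where "tMeet B A = Glb (leqt B) A"
definition tJoin :: "('b, 'z) bilat_scheme \<Rightarrow> 'b set \<Rightarrow> 'b" where "tJoin B A = Lub (leqt B) A"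
definition kMeet :: "('b, 'z) bilat_scheme \<Rightarrow> 'b set \<Rightarrow> 'b" where "kMeet B A = Glb (leqk B) A"
definition kJoin :: "('b, 'z) bilat_scheme \<Rightarrow> 'b set \<Rightarrow> 'b" where "kJoin B A = Lub (leqk B) A"

definition tand :: "('b, 'z) bilat_scheme \<Rightarrow> 'b \<Rightarrow> 'b \<Rightarrow> 'b" where "tand B a b = tMeet B {a, b}"
definition tor :: "('b, 'z) bilat_scheme \<Rightarrow> 'b \<Rightarrow> 'b \<Rightarrow> 'b" where "tor B a b = tJoin B {a, b}"
definition kand :: "('b, 'z) bilat_scheme \<Rightarrow> 'b \<Rightarrow> 'b \<Rightarrow> 'b" where "kand B a b = kMeet B {a, b}"
definition kor :: "('b, 'z) bilat_scheme \<Rightarrow> 'b \<Rightarrow> 'b \<Rightarrow> 'b" where "kor B a b = kJoin B {a, b}"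

definition bF :: "('b, 'z) bilat_scheme \<Rightarrow> 'b" where "bF B = Glb (leqt B) UNIV"
definition bT :: "('b, 'z) bilat_scheme \<Rightarrow> 'b" where "bT B = Lub (leqt B) UNIV"
definition bU :: "('b, 'z) bilat_scheme \<Rightarrow> 'b" where "bU B = Glb (leqk B) UNIV"
definition bI :: "('b, 'z) bilat_scheme \<Rightarrow> 'b" where "bI B = Lub (leqk B) UNIV"

definition complete_order :: "('b \<Rightarrow> 'b \<Rightarrow> bool) \<Rightarrow> bool" where
  "complete_order le \<longleftrightarrow> porder le \<and> (\<forall>A. \<exists>s. is_lub le A s) \<and> (\<forall>A. \<exists>s. is_glb le A s)"

definition distrib_over :: "('b \<Rightarrow> 'b \<Rightarrow> 'b) \<Rightarrow> ('b set \<Rightarrow> 'b) \<Rightarrow> bool" where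
  "distrib_over f Q \<longleftrightarrow> (\<forall>a A. A \<noteq> {} \<longrightarrow> f a (Q A) = Q ((f a) ` A))"

definition infinitely_distributive :: "('b, 'z) bilat_scheme \<Rightarrow> bool" where
  "infinitely_distributive B \<longleftrightarrow>
     (\<forall>f\<in>{tand B, tor B, kand B, kor B}. \<forall>Q\<in>{tMeet B, tJoin B, kMeet B, kJoin B}.
        distrib_over f Q)"

text \<open>Monotonicity of binary ops and of infinitary ops (for arbitrary index families,
  encoded as a set of pairs (a_i, b_i)).\<close>
definition bin_mono :: "('b \<Rightarrow> 'b \<Rightarrow> bool) \<Rightarrow> ('b \<Rightarrow> 'b \<Rightarrow> 'b) \<Rightarrow> bool" where
  "bin_mono le f \<longleftrightarrow> (\<forall>a a' b b'. le a a' \<and> le b b' \<longrightarrow> le (f a b) (f a' b'))"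

definition inf_mono :: "('b \<Rightarrow> 'b \<Rightarrow> bool) \<Rightarrow> ('b set \<Rightarrow> 'b) \<Rightarrow> bool" where
  "inf_mono le Q \<longleftrightarrow> (\<forall>S. (\<forall>(a, b)\<in>S. le a b) \<longrightarrow> le (Q (fst ` S)) (Q (snd ` S)))"

definition interlaced :: "('b, 'z) bilat_scheme \<Rightarrow> bool" where
  "interlaced B \<longleftrightarrow>
     (\<forall>le\<in>{leqt B, leqk B}.
        (\<forall>f\<in>{tand B, tor B, kand B, kor B}. bin_mono le f) \<and>
        (\<forall>Q\<in>{tMeet B, tJoin B, kMeet B, kJoin B}. inf_mono le Q))"

definition is_negation :: "('b, 'z) bilat_scheme \<Rightarrow> bool" where
  "is_negation B \<longleftrightarrow> (\<forall>a. bneg B (bneg B a) = a)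
     \<and> (\<forall>a b. leqt B a b \<longrightarrow> leqt B (bneg B b) (bneg B a))
     \<and> (\<forall>a b. leqk B a b \<longrightarrow> leqk B (bneg B a) (bneg B b))"

text \<open>Standing assumptions: complete, infinitely distributive, infinitarily interlaced
  bilattice with negation (the carrier is the whole (nonempty) type 'b).\<close>
definition bilattice :: "('b, 'z) bilat_scheme \<Rightarrow> bool" where
  "bilattice B \<longleftrightarrow> complete_order (leqt B) \<and> complete_order (leqk B)
     \<and> infinitely_distributive B \<and> interlaced B \<and> is_negation B"

datatype ('f, 'v) trm = Var 'v | Fn 'f "('f, 'v) trm list"

datatype 'f gterm = GFn 'f "'f gterm list"

datatype ('b, 'p, 'f, 'v) form =
    Pos 'p "('f, 'v) trm list"
  | Neg 'p "('f, 'v) trm list"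
  | Cst 'b
  | Equal "('f, 'v) trm" "('f, 'v) trm"
  | And "('b, 'p, 'f, 'v) form" "('b, 'p, 'f, 'v) form"
  | Or "('b, 'p, 'f, 'v) form" "('b, 'p, 'f, 'v) form"
  | Otimes "('b, 'p, 'f, 'v) form" "('b, 'p, 'f, 'v) form"
  | Oplus "('b, 'p, 'f, 'v) form" "('b, 'p, 'f, 'v) form"
  | Ex 'v "('b, 'p, 'f, 'v) form"
  | All 'v "('b, 'p, 'f, 'v) form"

fun tvars :: "('f, 'v) trm \<Rightarrow> 'v set" where
  "tvars (Var x) = {x}"
| "tvars (Fn f ts) = (\<Union>t\<in>set ts. tvars t)"

fun fv :: "('b, 'p, 'f, 'v) form \<Rightarrow> 'v set" where
  "fv (Pos p ts) = (\<Union>t\<in>set ts. tvars t)"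
| "fv (Neg p ts) = (\<Union>t\<in>set ts. tvars t)"
| "fv (Cst b) = {}"
| "fv (Equal s t) = tvars s \<union> tvars t"
| "fv (And a b) = fv a \<union> fv b"
| "fv (Or a b) = fv a \<union> fv b"
| "fv (Otimes a b) = fv a \<union> fv b"
| "fv (Oplus a b) = fv a \<union> fv b"
| "fv (Ex x a) = fv a - {x}"
| "fv (All x a) = fv a - {x}"

fun teval :: "('v \<Rightarrow> 'f gterm) \<Rightarrow> ('f, 'v) trm \<Rightarrow> 'f gterm" where
  "teval env (Var x) = env x"
| "teval env (Fn f ts) = GFn f (map (teval env) ts)"

text \<open>Ground atoms are pairs (predicate letter, list of closed terms).\<close>
type_synonym ('p, 'f, 'b) valuation = "'p \<times> 'f gterm list \<Rightarrow> 'b"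

text \<open>Contrajoin evaluation (v \<triangle> w) of a formula under an assignment of closed terms
  to variables (equivalently, evaluation of the corresponding closed instance).
  Ordinary evaluation v(phi) is the special case v \<triangle> v.\<close>
fun ceval :: "('b, 'z) bilat_scheme \<Rightarrow> ('p, 'f, 'b) valuation \<Rightarrow> ('p, 'f, 'b) valuation
    \<Rightarrow> ('v \<Rightarrow> 'f gterm) \<Rightarrow> ('b, 'p, 'f, 'v) form \<Rightarrow> 'b" where
  "ceval B v w env (Pos p ts) = v (p, map (teval env) ts)"
| "ceval B v w env (Neg p ts) = bneg B (w (p, map (teval env) ts))"
| "ceval B v w env (Cst b) = b"
| "ceval B v w env (Equal s t) = (if teval env s = teval env t then bT B else bF B)"
| "ceval B v w env (And a b) = tand B (ceval B v w env a) (ceval B v w env b)"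
| "ceval B v w env (Or a b) = tor B (ceval B v w env a) (ceval B v w env b)"
| "ceval B v w env (Otimes a b) = kand B (ceval B v w env a) (ceval B v w env b)"
| "ceval B v w env (Oplus a b) = kor B (ceval B v w env a) (ceval B v w env b)"
| "ceval B v w env (Ex x a) = tJoin B (range (\<lambda>t. ceval B v w (env(x := t)) a))"
| "ceval B v w env (All x a) = tMeet B (range (\<lambda>t. ceval B v w (env(x := t)) a))"

text \<open>A clause P(x_1,...,x_n) \<leftarrow> body is (P, [x_1,...,x_n], body).\<close>
type_synonym ('b, 'p, 'f, 'v) clause = "'p \<times> 'v list \<times> ('b, 'p, 'f, 'v) form"

definition is_clause :: "('b, 'p, 'f, 'v) clause \<Rightarrow> bool" where
  "is_clause c \<longleftrightarrow> (case c of (p, xs, body) \<Rightarrow> distinct xs \<and> fv body \<subseteq> set xs)"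

definition fitting_program :: "('b, 'p, 'f, 'v) clause set \<Rightarrow> bool" where
  "fitting_program P \<longleftrightarrow> finite P \<and> (\<forall>c\<in>P. is_clause c)
     \<and> (\<forall>c\<in>P. \<forall>d\<in>P. fst c = fst d \<longrightarrow> c = d)"

text \<open>Substitution of closed terms ts for variables xs (other variables do not occur
  free in the body, so their value is irrelevant).\<close>
definition inst_env :: "'v list \<Rightarrow> 'f gterm list \<Rightarrow> 'v \<Rightarrow> 'f gterm" where
  "inst_env xs ts y = (case map_of (zip xs ts) y of Some t \<Rightarrow> t | None \<Rightarrow> GFn undefined [])"

text \<open>Does the ground atom (p, ts) head some member of Inst-P?\<close>
definition heads :: "('b, 'p, 'f, 'v) clause set \<Rightarrow> 'p \<times> 'f gterm list \<Rightarrow> bool" where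
  "heads P A \<longleftrightarrow> (\<exists>c\<in>P. fst c = fst A \<and> length (fst (snd c)) = length (snd A))"

definition Psi :: "('b, 'z) bilat_scheme \<Rightarrow> ('b, 'p, 'f, 'v) clause set \<Rightarrow> 'b
    \<Rightarrow> ('p, 'f, 'b) valuation \<Rightarrow> ('p, 'f, 'b) valuation \<Rightarrow> ('p, 'f, 'b) valuation" where
  "Psi B P \<alpha> v w A =
     (if heads P A then
        (let c = (THE c. c \<in> P \<and> fst c = fst A)
         in ceval B v w (inst_env (fst (snd c)) (snd A)) (snd (snd c)))
      else \<alpha>)"

definition vle :: "('b \<Rightarrow> 'b \<Rightarrow> bool) \<Rightarrow> ('a \<Rightarrow> 'b) \<Rightarrow> ('a \<Rightarrow> 'b) \<Rightarrow> bool" where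
  "vle le v v' \<longleftrightarrow> (\<forall>A. le (v A) (v' A))"

definition least_fp :: "('x \<Rightarrow> 'x \<Rightarrow> bool) \<Rightarrow> ('x \<Rightarrow> 'x) \<Rightarrow> 'x" where
  "least_fp le f = (THE x. f x = x \<and> (\<forall>y. f y = y \<longrightarrow> le x y))"

definition greatest_fp :: "('x \<Rightarrow> 'x \<Rightarrow> bool) \<Rightarrow> ('x \<Rightarrow> 'x) \<Rightarrow> 'x" where
  "greatest_fp le f = (THE x. f x = x \<and> (\<forall>y. f y = y \<longrightarrow> le y x))"

definition Psi' :: "('b, 'z) bilat_scheme \<Rightarrow> ('b, 'p, 'f, 'v) clause set \<Rightarrow> 'b
    \<Rightarrow> ('p, 'f, 'b) valuation \<Rightarrow> ('p, 'f, 'b) valuation" where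
  "Psi' B P \<alpha> v =
     (if \<alpha> = bF B then least_fp (vle (leqt B)) (\<lambda>x. Psi B P \<alpha> x v)
      else if \<alpha> = bT B then greatest_fp (vle (leqt B)) (\<lambda>x. Psi B P \<alpha> x v)
      else if \<alpha> = bU B then least_fp (vle (leqk B)) (\<lambda>x. Psi B P \<alpha> x v)
      else greatest_fp (vle (leqk B)) (\<lambda>x. Psi B P \<alpha> x v))"

end

theory Submission
  imports Defs
begin

text \<open>
  For fixed \<open>v\<close>, the map \<open>x \<mapsto> \<Psi>(x, v)\<close> is monotone for both orders, and by interlacing
  \<open>\<Psi>\<close> is \<open>\<le>\<^sub>k\<close>-monotone in both arguments (\<open>v\<close> only enters through negation, which
  preserves \<open>\<le>\<^sub>k\<close>). Approaching the extremal fixpoints of \<open>\<Psi>(-, v)\<close> and \<open>\<Psi>(-, v')\<close> in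
  lockstep, both the iteration steps and the limit joins preserve \<open>\<le>\<^sub>k\<close>, so \<open>v \<le>\<^sub>k v'\<close>
  implies \<open>\<Psi>'(v) \<le>\<^sub>k \<Psi>'(v')\<close>. Knaster-Tarski for the complete lattice of valuations under
  \<open>\<le>\<^sub>k\<close> then gives the least and greatest fixpoints of \<open>\<Psi>'\<close>.
\<close>

lemma porderD:
  assumes "porder le"
  shows porder_refl: "le a a"
    and porder_antisym: "le a b \<Longrightarrow> le b a \<Longrightarrow> a = b"
    and porder_trans: "le a b \<Longrightarrow> le b c \<Longrightarrow> le a c"
  using assms unfolding porder_def by blast+

lemma complete_order_porder: "complete_order le \<Longrightarrow> porder le"
  by (simp add: complete_order_def)

lemma porder_conversep: "porder le \<Longrightarrow> porder le\<inverse>\<inverse>"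
  unfolding porder_def conversep_iff by blast

lemma is_lub_conversep: "is_lub le\<inverse>\<inverse> A s = is_glb le A s"
  unfolding is_lub_def is_glb_def by simp

lemma is_glb_conversep: "is_glb le\<inverse>\<inverse> A s = is_lub le A s"
  unfolding is_lub_def is_glb_def by simp

lemma Lub_conversep: "Lub le\<inverse>\<inverse> = Glb le"
  by (simp add: fun_eq_iff Lub_def Glb_def is_lub_conversep)

lemma complete_order_conversep: "complete_order le \<Longrightarrow> complete_order le\<inverse>\<inverse>"
  unfolding complete_order_def is_lub_conversep[abs_def] is_glb_conversep[abs_def]
  by (simp add: porder_conversep)

lemma is_lub_unique: "porder le \<Longrightarrow> is_lub le A s \<Longrightarrow> is_lub le A t \<Longrightarrow> s = t"
  unfolding is_lub_def by (blast intro: porder_antisym)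

lemma is_lub_Lub:
  assumes "complete_order le"
  shows "is_lub le A (Lub le A)"
proof -
  from assms obtain s where s: "is_lub le A s"
    by (auto simp: complete_order_def)
  show ?thesis
    unfolding Lub_def
    by (rule theI[where P = "is_lub le A", OF s])
      (rule is_lub_unique[OF complete_order_porder[OF assms] _ s])
qed

lemma is_glb_Glb: "complete_order le \<Longrightarrow> is_glb le A (Glb le A)"
  using is_lub_Lub[OF complete_order_conversep] by (simp add: is_lub_conversep Lub_conversep)

lemma Lub_eqI: "complete_order le \<Longrightarrow> is_lub le A s \<Longrightarrow> Lub le A = s"
  by (rule is_lub_unique[OF complete_order_porder is_lub_Lub])

lemma least_fp_least_fixpoint:
  assumes co: "complete_order le" and mono: "monotone le le f"
  shows least_fp_fixpoint: "f (least_fp le f) = least_fp le f"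
    and least_fp_lowerbound: "le (f y) y \<Longrightarrow> le (least_fp le f) y"
proof -
  note po = complete_order_porder[OF co]
  define m where "m = Glb le {x. le (f x) x}"
  have glb: "is_glb le {x. le (f x) x} m"
    unfolding m_def by (rule is_glb_Glb[OF co])
  have lower: "le m y" if "le (f y) y" for y
    using glb that unfolding is_glb_def by simp
  have "le (f m) y" if "le (f y) y" for y
    using porder_trans[OF po monotoneD[OF mono lower[OF that]] that] .
  then have fm: "le (f m) m"
    using glb unfolding is_glb_def by simp
  have "le m (f m)"
    by (rule lower) (rule monotoneD[OF mono fm])
  with fm have fix_m: "f m = m"
    by (rule porder_antisym[OF po])
  have "least_fp le f = m"
    unfolding least_fp_def
  proof (rule the_equality)
    show "f m = m \<and> (\<forall>y. f y = y \<longrightarrow> le m y)"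
      using fix_m lower porder_refl[OF po] by simp
  next
    fix x assume x: "f x = x \<and> (\<forall>y. f y = y \<longrightarrow> le x y)"
    have "le x m" using x fix_m by simp
    moreover have "le m x" by (rule lower) (simp add: x porder_refl[OF po])
    ultimately show "x = m" by (rule porder_antisym[OF po])
  qed
  then show "f (least_fp le f) = least_fp le f" and "le (f y) y \<Longrightarrow> le (least_fp le f) y"
    using fix_m lower by simp_all
qed

lemma greatest_fp_conversep: "greatest_fp le f = least_fp le\<inverse>\<inverse> f"
  unfolding greatest_fp_def least_fp_def by simp

lemma monotone_conversep: "monotone le le f \<Longrightarrow> monotone le\<inverse>\<inverse> le\<inverse>\<inverse> f"
  by (simp add: monotone_on_def)

lemma greatest_fp_greatest_fixpoint:
  assumes "complete_order le" and "monotone le le f"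
  shows greatest_fp_fixpoint: "f (greatest_fp le f) = greatest_fp le f"
    and greatest_fp_upperbound: "le y (f y) \<Longrightarrow> le y (greatest_fp le f)"
  using least_fp_least_fixpoint[OF complete_order_conversep monotone_conversep, OF assms]
  by (simp_all add: greatest_fp_conversep)

text \<open>
  A relational analogue of \<open>lfp_ordinal_induct\<close> for two operators at once: the join of
  all \<open>R\<close>-related pairs below \<open>(least_fp le f, least_fp le f')\<close> is a prefixpoint of
  \<open>f \<times> f'\<close>, hence equals that pair.
\<close>
lemma least_fp_pair_induct:
  assumes co: "complete_order le"
    and mono: "monotone le le f" and mono': "monotone le le f'"
    and step: "\<And>x y. R x y \<Longrightarrow> R (f x) (f' y)"
    and join: "\<And>S. \<forall>(x, y)\<in>S. R x y \<Longrightarrow> R (Lub le (fst ` S)) (Lub le (snd ` S))"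
  shows "R (least_fp le f) (least_fp le f')"
proof -
  let ?m = "least_fp le f" and ?m' = "least_fp le f'"
  define T where "T = {(x, y). le x ?m \<and> le y ?m' \<and> R x y}"
  define J where "J = Lub le (fst ` T)"
  define J' where "J' = Lub le (snd ` T)"
  have lub: "is_lub le (fst ` T) J" "is_lub le (snd ` T) J'"
    unfolding J_def J'_def by (rule is_lub_Lub[OF co])+
  have R_J: "R J J'"
    unfolding J_def J'_def by (rule join) (simp add: T_def)
  have below: "le J ?m" "le J' ?m'"
    using lub unfolding is_lub_def T_def by auto
  have "le (f J) ?m" "le (f' J') ?m'"
    using monotoneD[OF mono below(1)] monotoneD[OF mono' below(2)]
    by (simp_all add: least_fp_fixpoint[OF co mono] least_fp_fixpoint[OF co mono'])
  with R_J step have "(f J, f' J') \<in> T"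
    by (simp add: T_def)
  then have "f J \<in> fst ` T" "f' J' \<in> snd ` T"
    by force+
  then have "le (f J) J" "le (f' J') J'"
    using lub unfolding is_lub_def by blast+
  then have "le ?m J" "le ?m' J'"
    by (simp_all add: least_fp_lowerbound[OF co mono] least_fp_lowerbound[OF co mono'])
  with below have "J = ?m" "J' = ?m'"
    by (simp_all add: porder_antisym[OF complete_order_porder[OF co]])
  with R_J show ?thesis by simp
qed

lemma vle_conversep: "vle le\<inverse>\<inverse> = (vle le)\<inverse>\<inverse>"
  by (simp add: fun_eq_iff vle_def)

lemma porder_vle: "porder le \<Longrightarrow> porder (vle le)"
  unfolding porder_def vle_def by (metis ext)

lemma is_lub_vle: "complete_order le \<Longrightarrow> is_lub (vle le) S (\<lambda>A. Lub le ((\<lambda>x. x A) ` S))"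
  using is_lub_Lub unfolding is_lub_def vle_def by fastforce

lemma is_glb_vle: "complete_order le \<Longrightarrow> is_glb (vle le) S (\<lambda>A. Glb le ((\<lambda>x. x A) ` S))"
  using is_glb_Glb unfolding is_glb_def vle_def by fastforce

lemma complete_order_vle: "complete_order le \<Longrightarrow> complete_order (vle le)"
  using porder_vle is_lub_vle is_glb_vle unfolding complete_order_def by blast

lemma Lub_vle: "complete_order le \<Longrightarrow> Lub (vle le) S = (\<lambda>A. Lub le ((\<lambda>x. x A) ` S))"
  by (rule Lub_eqI[OF complete_order_vle is_lub_vle])

lemma inf_mono_range:
  assumes "inf_mono le Q" and "\<And>t. le (g t) (g' t)"
  shows "le (Q (range g)) (Q (range g'))"
proof -
  let ?S = "range (\<lambda>t. (g t, g' t))"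
  have "le (Q (fst ` ?S)) (Q (snd ` ?S))"
    using assms unfolding inf_mono_def by auto
  then show ?thesis by (simp add: image_image)
qed

lemma inf_mono_vle:
  assumes "inf_mono le Q" and "\<forall>(x, y)\<in>S. vle le x y"
  shows "vle le (\<lambda>A. Q ((\<lambda>x. x A) ` fst ` S)) (\<lambda>A. Q ((\<lambda>x. x A) ` snd ` S))"
  unfolding vle_def
proof
  fix A
  let ?S = "(\<lambda>p. (fst p A, snd p A)) ` S"
  have "\<forall>(a, b)\<in>?S. le a b"
    using assms(2) unfolding vle_def by auto
  then have "le (Q (fst ` ?S)) (Q (snd ` ?S))"
    using assms(1) unfolding inf_mono_def by blast
  then show "le (Q ((\<lambda>x. x A) ` fst ` S)) (Q ((\<lambda>x. x A) ` snd ` S))"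
    by (simp add: image_image)
qed

lemma least_fp_vle_related:
  fixes f f' :: "('a \<Rightarrow> 'b) \<Rightarrow> 'a \<Rightarrow> 'b"
  assumes co: "complete_order le"
    and mono: "monotone (vle le) (vle le) f" and mono': "monotone (vle le) (vle le) f'"
    and Lub_mono: "inf_mono lk (Lub le)"
    and step: "\<And>x y. vle lk x y \<Longrightarrow> vle lk (f x) (f' y)"
  shows "vle lk (least_fp (vle le) f) (least_fp (vle le) f')"
proof (rule least_fp_pair_induct[where R = "vle lk", OF complete_order_vle[OF co] mono mono' step])
  fix S :: "(('a \<Rightarrow> 'b) \<times> ('a \<Rightarrow> 'b)) set"
  assume "\<forall>(x, y)\<in>S. vle lk x y"
  then show "vle lk (Lub (vle le) (fst ` S)) (Lub (vle le) (snd ` S))"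
    unfolding Lub_vle[OF co] by (rule inf_mono_vle[OF Lub_mono])
qed

lemma greatest_fp_vle_related:
  assumes co: "complete_order le"
    and mono: "monotone (vle le) (vle le) f" and mono': "monotone (vle le) (vle le) f'"
    and Glb_mono: "inf_mono lk (Glb le)"
    and step: "\<And>x y. vle lk x y \<Longrightarrow> vle lk (f x) (f' y)"
  shows "vle lk (greatest_fp (vle le) f) (greatest_fp (vle le) f')"
  unfolding greatest_fp_conversep vle_conversep[symmetric]
  using complete_order_conversep[OF co] _ _ _ step
proof (rule least_fp_vle_related)
  show "monotone (vle le\<inverse>\<inverse>) (vle le\<inverse>\<inverse>) f" "monotone (vle le\<inverse>\<inverse>) (vle le\<inverse>\<inverse>) f'"
    using monotone_conversep[OF mono] monotone_conversep[OF mono'] by (simp_all add: vle_conversep)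
  show "inf_mono lk (Lub le\<inverse>\<inverse>)"
    using Glb_mono by (simp add: Lub_conversep)
qed

lemma bilattice_order:
  assumes "bilattice B" and "le \<in> {leqt B, leqk B}"
  shows bilattice_complete_order: "complete_order le"
    and bilattice_refl: "le a a"
    and bilattice_bin_mono:
      "bin_mono le (tand B)" "bin_mono le (tor B)" "bin_mono le (kand B)" "bin_mono le (kor B)"
    and bilattice_inf_mono:
      "inf_mono le (Glb (leqt B))" "inf_mono le (Lub (leqt B))"
      "inf_mono le (Glb (leqk B))" "inf_mono le (Lub (leqk B))"
  using assms porder_refl[OF complete_order_porder]
  unfolding bilattice_def interlaced_def tMeet_def[abs_def] tJoin_def[abs_def]
    kMeet_def[abs_def] kJoin_def[abs_def]
  by auto

lemma ceval_mono:
  assumes bl: "bilattice B" and le: "le \<in> {leqt B, leqk B}"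
    and v: "vle le v v'" and w: "\<forall>A. le (bneg B (w A)) (bneg B (w' A))"
  shows "le (ceval B v w env \<phi>) (ceval B v' w' env \<phi>)"
proof (induction \<phi> arbitrary: env)
  case (Ex x \<phi>)
  show ?case
    unfolding ceval.simps tJoin_def by (rule inf_mono_range[OF bilattice_inf_mono(2)[OF bl le] Ex.IH])
next
  case (All x \<phi>)
  show ?case
    unfolding ceval.simps tMeet_def by (rule inf_mono_range[OF bilattice_inf_mono(1)[OF bl le] All.IH])
qed (use v w bilattice_bin_mono[OF bl le] in \<open>simp_all add: vle_def bin_mono_def bilattice_refl[OF bl le]\<close>)

lemma Psi_mono:
  assumes "bilattice B" and "le \<in> {leqt B, leqk B}"
    and "vle le v v'" and "\<forall>A. le (bneg B (w A)) (bneg B (w' A))"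
  shows "vle le (Psi B P \<alpha> v w) (Psi B P \<alpha> v' w')"
  by (simp add: vle_def Psi_def Let_def ceval_mono[OF assms] bilattice_refl[OF assms(1,2)])

lemma Psi_monotone:
  assumes "bilattice B" and "le \<in> {leqt B, leqk B}"
  shows "monotone (vle le) (vle le) (\<lambda>x. Psi B P \<alpha> x w)"
  by (rule monotoneI, rule Psi_mono[OF assms]) (simp_all add: bilattice_refl[OF assms])

lemma Psi_mono_knowledge:
  assumes "bilattice B" and "vle (leqk B) x y" and "vle (leqk B) v v'"
  shows "vle (leqk B) (Psi B P \<alpha> x v) (Psi B P \<alpha> y v')"
proof (rule Psi_mono[OF assms(1) _ assms(2)])
  show "\<forall>A. leqk B (bneg B (v A)) (bneg B (v' A))"
    using assms(1,3) unfolding bilattice_def is_negation_def vle_def by blast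
qed simp

lemma extremal_fp_Psi_mono_knowledge:
  assumes bl: "bilattice B" and le: "le \<in> {leqt B, leqk B}" and vv': "vle (leqk B) v v'"
  shows least_fp_Psi_mono_knowledge: "vle (leqk B)
      (least_fp (vle le) (\<lambda>x. Psi B P \<alpha> x v)) (least_fp (vle le) (\<lambda>x. Psi B P \<alpha> x v'))"
    and greatest_fp_Psi_mono_knowledge: "vle (leqk B)
      (greatest_fp (vle le) (\<lambda>x. Psi B P \<alpha> x v)) (greatest_fp (vle le) (\<lambda>x. Psi B P \<alpha> x v'))"
proof -
  have Lub: "inf_mono (leqk B) (Lub le)" and Glb: "inf_mono (leqk B) (Glb le)"
    using le bilattice_inf_mono[OF bl, of "leqk B"] by auto
  note co = bilattice_complete_order[OF bl le] and mono = Psi_monotone[OF bl le]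
  note step = Psi_mono_knowledge[OF bl _ vv']
  show "vle (leqk B)
      (least_fp (vle le) (\<lambda>x. Psi B P \<alpha> x v)) (least_fp (vle le) (\<lambda>x. Psi B P \<alpha> x v'))"
    by (rule least_fp_vle_related[OF co mono mono Lub step])
  show "vle (leqk B)
      (greatest_fp (vle le) (\<lambda>x. Psi B P \<alpha> x v)) (greatest_fp (vle le) (\<lambda>x. Psi B P \<alpha> x v'))"
    by (rule greatest_fp_vle_related[OF co mono mono Glb step])
qed

lemma Psi'_monotone:
  assumes "bilattice B"
  shows "monotone (vle (leqk B)) (vle (leqk B)) (Psi' B P \<alpha>)"
  by (rule monotoneI)
    (simp add: Psi'_def assms least_fp_Psi_mono_knowledge greatest_fp_Psi_mono_knowledge)

theorem theorem2:
  fixes B :: "'b bilat"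
    and P :: "('b, 'p, 'f, 'v) clause set"
    and \<alpha> :: 'b
  assumes "bilattice B"
    and "fitting_program P"
    and "\<alpha> \<in> {bF B, bT B, bU B, bI B}"
  shows "(\<exists>v. Psi' B P \<alpha> v = v \<and> (\<forall>w. Psi' B P \<alpha> w = w \<longrightarrow> vle (leqk B) v w)) \<and>
         (\<exists>v. Psi' B P \<alpha> v = v \<and> (\<forall>w. Psi' B P \<alpha> w = w \<longrightarrow> vle (leqk B) w v))"
proof -
  let ?F = "Psi' B P \<alpha>" and ?le = "vle (leqk B)"
  have co: "complete_order ?le"
    by (rule complete_order_vle[OF bilattice_complete_order[OF assms(1)]]) simp
  have mono: "monotone ?le ?le ?F"
    by (rule Psi'_monotone[OF assms(1)])
  note refl = porder_refl[OF complete_order_porder[OF co]]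
  show ?thesis
  proof (intro conjI exI allI impI)
    show "?F (least_fp ?le ?F) = least_fp ?le ?F"
      by (rule least_fp_fixpoint[OF co mono])
    show "?le (least_fp ?le ?F) w" if "?F w = w" for w
      by (rule least_fp_lowerbound[OF co mono]) (simp add: that refl)
    show "?F (greatest_fp ?le ?F) = greatest_fp ?le ?F"
      by (rule greatest_fp_fixpoint[OF co mono])
    show "?le w (greatest_fp ?le ?F)" if "?F w = w" for w
      by (rule greatest_fp_upperbound[OF co mono]) (simp add: that refl)
  qed
qed

end
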